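(* Let $C_1,C_2$ be $d$-copulas admitting tail dependence functions with $C_1<_{TD}C_2$. Let $S\subset(0,\infty)^d$ be a cone (i.e. $\boldsymbol w\in S$ implies $\lambda\boldsymbol w\in S$ for all $\lambda>0$) such that $S\cup\{\boldsymbol 0\}$ is closed in $[0,\infty)^d$. Then there exists $\varepsilon>0$ such that $C_1(\boldsymbol u)\le C_2(\boldsymbol u)$ for all $\boldsymbol u\in S\cap B_\varepsilon(\boldsymbol 0)\cap[0,1]^d$.
   Context: A $d$-copula is a grounded, $d$-increasing function $C:[0,1]^d\to[0,1]$ with uniform margins. Its tail dependence function is $\Lambda(\boldsymbol w;C)=\lim_{s\searrow0}C(s\boldsymbol w)/s$ for $\boldsymbol w\in[0,\infty)^d$, assumed to exist for all $\boldsymbol w$. $C_1<_{TD}C_2$ means $\Lambda(\boldsymbol w;C_1)<\Lambda(\boldsymbol w;C_2)$ for all $\boldsymbol w\in(0,\infty)^d$. $B_\varepsilon(\boldsymbol 0)$ is the open Euclidean ball of radius $\varepsilon$ centred at $\boldsymbol 0$. *)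

theory Defs
  imports "HOL-Analysis.Analysis"
begin

definition unit_cube :: "(real^'d) set" where
  "unit_cube = {u. \<forall>i. 0 \<le> u$i \<and> u$i \<le> 1}"

definition nonneg_orthant :: "(real^'d) set" where
  "nonneg_orthant = {u. \<forall>i. 0 \<le> u$i}"

definition pos_orthant :: "(real^'d) set" where
  "pos_orthant = {u. \<forall>i. 0 < u$i}"

definition C_volume :: "(real^'d \<Rightarrow> real) \<Rightarrow> real^'d \<Rightarrow> real^'d \<Rightarrow> real" where
  "C_volume C a b =
     (\<Sum>J\<in>Pow (UNIV::'d set). (-1) ^ card J * C (\<chi> i. if i \<in> J then a$i else b$i))"

definition copula :: "(real^'d::finite \<Rightarrow> real) \<Rightarrow> bool" where
  "copula C \<longleftrightarrow>
     (\<forall>u\<in>unit_cube. 0 \<le> C u \<and> C u \<le> 1) \<and>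
     (\<forall>u\<in>unit_cube. (\<exists>i. u$i = 0) \<longrightarrow> C u = 0) \<and>
     (\<forall>u\<in>unit_cube. \<forall>i. (\<forall>j. j \<noteq> i \<longrightarrow> u$j = 1) \<longrightarrow> C u = u$i) \<and>
     (\<forall>a\<in>unit_cube. \<forall>b\<in>unit_cube. (\<forall>i. a$i \<le> b$i) \<longrightarrow> 0 \<le> C_volume C a b)"

definition tail_dep :: "(real^'d \<Rightarrow> real) \<Rightarrow> real^'d \<Rightarrow> real" where
  "tail_dep C w = Lim (at_right 0) (\<lambda>s. C (s *\<^sub>R w) / s)"

definition admits_tail_dep :: "(real^'d \<Rightarrow> real) \<Rightarrow> bool" where
  "admits_tail_dep C \<longleftrightarrow>
     (\<forall>w\<in>nonneg_orthant. (\<exists>L. ((\<lambda>s. C (s *\<^sub>R w) / s) \<longlongrightarrow> L) (at_right 0)))"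

definition TD_less :: "(real^'d \<Rightarrow> real) \<Rightarrow> (real^'d \<Rightarrow> real) \<Rightarrow> bool" where
  "TD_less C1 C2 \<longleftrightarrow> (\<forall>w\<in>pos_orthant. tail_dep C1 w < tail_dep C2 w)"

end

theory Submission
  imports Defs
begin

text \<open>A copula is Lipschitz on the unit cube, so near a direction \<open>w\<^sub>0\<close> with
  \<open>\<Lambda>(w\<^sub>0;C\<^sub>1) < \<Lambda>(w\<^sub>0;C\<^sub>2)\<close> the gap \<open>C\<^sub>2(s w\<^sub>0) - C\<^sub>1(s w\<^sub>0) \<approx> s (\<Lambda>(w\<^sub>0;C\<^sub>2) - \<Lambda>(w\<^sub>0;C\<^sub>1))\<close>
  dominates the perturbation \<open>|C\<^sub>k(s w) - C\<^sub>k(s w\<^sub>0)| \<le> d s |w - w\<^sub>0|\<close> for all \<open>w\<close> in a fixed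
  ball around \<open>w\<^sub>0\<close> and all small \<open>s\<close>. The directions of \<open>S\<close> form the compact set
  \<open>S \<inter> sphere 0 1\<close>, so finitely many such balls cover it, and every \<open>u \<in> S\<close> is \<open>|u|\<close> times
  one of these directions.\<close>

definition vec_upd :: "real^'d \<Rightarrow> 'd \<Rightarrow> real \<Rightarrow> real^'d" where
  "vec_upd x i t = (\<chi> k. if k = i then t else x$k)"

lemma vec_upd_nth [simp]: "vec_upd x i t $ k = (if k = i then t else x$k)"
  by (simp add: vec_upd_def)

lemma vec_upd_in_unit_cube: "x \<in> unit_cube \<Longrightarrow> 0 \<le> t \<Longrightarrow> t \<le> 1 \<Longrightarrow> vec_upd x i t \<in> unit_cube"
  by (simp add: unit_cube_def)

lemma C_volume_eq_sum_Pow_support: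
  fixes C :: "real^'d::finite \<Rightarrow> real"
  assumes "copula C" "a \<in> unit_cube" "b \<in> unit_cube" "\<forall>k. k \<notin> I \<longrightarrow> a$k = 0"
  shows "C_volume C a b = (\<Sum>J\<in>Pow I. (-1) ^ card J * C (\<chi> i. if i \<in> J then a$i else b$i))"
  unfolding C_volume_def
proof (rule sum.mono_neutral_right)
  show "\<forall>J\<in>Pow UNIV - Pow I. (-1) ^ card J * C (\<chi> i. if i \<in> J then a$i else b$i) = 0"
  proof
    fix J assume "J \<in> Pow UNIV - Pow I"
    then obtain k where k: "k \<in> J" "k \<notin> I" by auto
    have "(\<chi> i. if i \<in> J then a$i else b$i) \<in> unit_cube"
      using assms(2,3) by (simp add: unit_cube_def)
    moreover have "(\<chi> i. if i \<in> J then a$i else b$i) $ k = 0" using k assms(4) by simp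
    ultimately have "C (\<chi> i. if i \<in> J then a$i else b$i) = 0"
      using assms(1) unfolding copula_def by blast
    thus "(-1) ^ card J * C (\<chi> i. if i \<in> J then a$i else b$i) = 0" by simp
  qed
qed auto

lemma copula_mono_coord:
  fixes C :: "real^'d::finite \<Rightarrow> real"
  assumes "copula C" "x \<in> unit_cube" "0 \<le> s" "s \<le> t" "t \<le> 1"
  shows "C (vec_upd x i s) \<le> C (vec_upd x i t)"
proof -
  define a :: "real^'d" where "a = (\<chi> k. if k = i then s else 0)"
  define b where "b = vec_upd x i t"
  have ab: "a \<in> unit_cube" "b \<in> unit_cube" "\<forall>k. a$k \<le> b$k"
    using assms by (simp_all add: a_def b_def unit_cube_def)
  have "0 \<le> C_volume C a b" using assms(1) ab unfolding copula_def by blast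
  also have "C_volume C a b = (\<Sum>J\<in>Pow {i}. (-1) ^ card J * C (\<chi> k. if k \<in> J then a$k else b$k))"
    by (rule C_volume_eq_sum_Pow_support[OF assms(1) ab(1,2)]) (simp add: a_def)
  also have "\<dots> = C b - C (\<chi> k. if k = i then a$k else b$k)"
    by (simp add: Pow_insert)
  also have "(\<chi> k. if k = i then a$k else b$k) = vec_upd x i s"
    by (simp add: vec_eq_iff a_def b_def)
  finally show ?thesis by (simp add: b_def)
qed

text \<open>This is the 2-increasing property on the rectangle \<open>[s,t] \<times> [y\<^sub>j,1]\<close> in coordinates \<open>i,j\<close>.\<close>

lemma copula_increment_mono_coord:
  fixes C :: "real^'d::finite \<Rightarrow> real"
  assumes "copula C" "y \<in> unit_cube" "0 \<le> s" "s \<le> t" "t \<le> 1" "j \<noteq> i"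
  shows "C (vec_upd y i t) - C (vec_upd y i s)
    \<le> C (vec_upd (vec_upd y j 1) i t) - C (vec_upd (vec_upd y j 1) i s)"
proof -
  define a :: "real^'d" where "a = (\<chi> k. if k = i then s else if k = j then y$j else 0)"
  define b :: "real^'d" where "b = (\<chi> k. if k = i then t else if k = j then 1 else y$k)"
  define v where "v J = (\<chi> k. if k \<in> J then a$k else b$k)" for J
  have ab: "a \<in> unit_cube" "b \<in> unit_cube" "\<forall>k. a$k \<le> b$k"
    using assms by (simp_all add: a_def b_def unit_cube_def)
  have v: "v {} = vec_upd (vec_upd y j 1) i t" "v {i} = vec_upd (vec_upd y j 1) i s"
      "v {j} = vec_upd y i t" "v {i,j} = vec_upd y i s"
    using assms(6) by (simp_all add: vec_eq_iff v_def a_def b_def)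
  have "0 \<le> C_volume C a b" using assms(1) ab unfolding copula_def by blast
  also have "C_volume C a b = (\<Sum>J\<in>Pow {i,j}. (-1) ^ card J * C (v J))"
    unfolding v_def by (rule C_volume_eq_sum_Pow_support[OF assms(1) ab(1,2)]) (simp add: a_def)
  also have "Pow {i,j} = {{}, {i}, {j}, {i,j}}" by (auto simp: Pow_insert)
  also have "(\<Sum>J\<in>{{}, {i}, {j}, {i,j}}. (-1) ^ card J * C (v J))
      = C (v {}) - C (v {i}) - C (v {j}) + C (v {i,j})"
    using assms(6) by (simp add: insert_commute)
  finally show ?thesis by (simp add: v)
qed

text \<open>Raising the other coordinates to 1 one by one only increases the increment, and with
  all of them equal to 1 the uniform margins make it \<open>t - s\<close>.\<close>

lemma copula_increment_le:
  fixes C :: "real^'d::finite \<Rightarrow> real"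
  assumes "copula C" "x \<in> unit_cube" "0 \<le> s" "s \<le> t" "t \<le> 1"
  shows "C (vec_upd x i t) - C (vec_upd x i s) \<le> t - s"
proof -
  define D where "D y = C (vec_upd y i t) - C (vec_upd y i s)" for y
  define Y where "Y A = (\<chi> k. if k \<in> A then 1 else x$k)" for A :: "'d set"
  have Y_cube: "Y A \<in> unit_cube" for A using assms(2) by (simp add: Y_def unit_cube_def)
  have D_mono: "D x \<le> D (Y A)" for A
  proof (induction A rule: infinite_finite_induct)
    case empty
    have "Y {} = x" by (simp add: Y_def vec_eq_iff)
    then show ?case by simp
  next
    case (insert j A)
    have Y_insert: "Y (insert j A) = vec_upd (Y A) j 1" by (simp add: Y_def vec_eq_iff)
    show ?case
    proof (cases "j = i")
      case True
      then have "vec_upd (vec_upd (Y A) j 1) i r = vec_upd (Y A) i r" for r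
        by (simp add: vec_eq_iff)
      then show ?thesis using insert Y_insert by (simp add: D_def)
    next
      case False
      have "D (Y A) \<le> D (Y (insert j A))"
        unfolding Y_insert D_def
        by (rule copula_increment_mono_coord[OF assms(1) Y_cube assms(3-5) False])
      then show ?thesis using insert by simp
    qed
  qed simp
  have margin: "C (vec_upd (Y UNIV) i r) = r" if "0 \<le> r" "r \<le> 1" for r
  proof -
    have "vec_upd (Y UNIV) i r \<in> unit_cube" using Y_cube that by (simp add: vec_upd_in_unit_cube)
    moreover have "\<forall>j. j \<noteq> i \<longrightarrow> vec_upd (Y UNIV) i r $ j = 1" by (simp add: Y_def)
    ultimately have "C (vec_upd (Y UNIV) i r) = vec_upd (Y UNIV) i r $ i"
      using assms(1) unfolding copula_def by blast
    then show ?thesis by simp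
  qed
  show ?thesis using D_mono[of UNIV] margin[of s] margin[of t] assms(3-5) by (simp add: D_def)
qed

lemma copula_lipschitz_coord:
  fixes C :: "real^'d::finite \<Rightarrow> real"
  assumes "copula C" "x \<in> unit_cube" "0 \<le> t" "t \<le> 1"
  shows "\<bar>C (vec_upd x i t) - C x\<bar> \<le> \<bar>t - x$i\<bar>"
proof -
  have x_eq: "x = vec_upd x i (x$i)" by (simp add: vec_eq_iff)
  have xi: "0 \<le> x$i" "x$i \<le> 1" using assms(2) by (auto simp: unit_cube_def)
  show ?thesis
  proof (cases "x$i \<le> t")
    case True
    have "C (vec_upd x i (x$i)) \<le> C (vec_upd x i t)"
      by (rule copula_mono_coord) (use assms xi True in auto)
    moreover have "C (vec_upd x i t) - C (vec_upd x i (x$i)) \<le> t - x$i"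
      by (rule copula_increment_le) (use assms xi True in auto)
    ultimately show ?thesis using True by (subst (1 2) x_eq) auto
  next
    case False
    have "C (vec_upd x i t) \<le> C (vec_upd x i (x$i))"
      by (rule copula_mono_coord) (use assms xi False in auto)
    moreover have "C (vec_upd x i (x$i)) - C (vec_upd x i t) \<le> x$i - t"
      by (rule copula_increment_le) (use assms xi False in auto)
    ultimately show ?thesis using False by (subst (1 2) x_eq) auto
  qed
qed

lemma copula_lipschitz_l1:
  fixes C :: "real^'d::finite \<Rightarrow> real"
  assumes "copula C" "u \<in> unit_cube" "v \<in> unit_cube"
  shows "\<bar>C u - C v\<bar> \<le> (\<Sum>i\<in>UNIV. \<bar>u$i - v$i\<bar>)"
proof -
  define Z where "Z A = (\<chi> k. if k \<in> A then v$k else u$k)" for A :: "'d set"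
  have Z_cube: "Z A \<in> unit_cube" for A using assms(2,3) by (simp add: Z_def unit_cube_def)
  have "\<bar>C (Z A) - C u\<bar> \<le> (\<Sum>i\<in>A. \<bar>u$i - v$i\<bar>)" for A
  proof (induction A rule: infinite_finite_induct)
    case empty
    have "Z {} = u" by (simp add: Z_def vec_eq_iff)
    then show ?case by simp
  next
    case (insert j A)
    have "Z (insert j A) = vec_upd (Z A) j (v$j)" by (simp add: Z_def vec_eq_iff)
    moreover have "Z A $ j = u$j" using insert by (simp add: Z_def)
    moreover have "\<bar>C (vec_upd (Z A) j (v$j)) - C (Z A)\<bar> \<le> \<bar>v$j - Z A $ j\<bar>"
      using assms(3) by (intro copula_lipschitz_coord[OF assms(1) Z_cube]) (auto simp: unit_cube_def)
    ultimately show ?case using insert by (simp add: abs_minus_commute)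
  qed simp
  from this[of UNIV] show ?thesis by (simp add: Z_def abs_minus_commute)
qed

lemma copula_lipschitz:
  fixes C :: "real^'d::finite \<Rightarrow> real"
  assumes "copula C" "u \<in> unit_cube" "v \<in> unit_cube"
  shows "\<bar>C u - C v\<bar> \<le> real CARD('d) * norm (u - v)"
proof -
  have "\<bar>C u - C v\<bar> \<le> (\<Sum>i\<in>UNIV. \<bar>u$i - v$i\<bar>)" by (rule copula_lipschitz_l1[OF assms])
  also have "\<dots> \<le> (\<Sum>i\<in>(UNIV::'d set). norm (u - v))"
    using component_le_norm_cart[of "u - v"] by (intro sum_mono) simp
  finally show ?thesis by simp
qed

lemma scaleR_in_unit_cube:
  fixes w :: "real^'d"
  assumes "w \<in> nonneg_orthant" "0 \<le> s" "s * norm w \<le> 1"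
  shows "s *\<^sub>R w \<in> unit_cube"
proof -
  have "s * w$i \<le> s * norm w" for i
    using assms(2) component_le_norm_cart[of w i] by (intro mult_left_mono) auto
  then show ?thesis using assms unfolding unit_cube_def nonneg_orthant_def
    by (auto intro: order_trans[OF _ assms(3)])
qed

lemma tail_dep_tendsto:
  assumes "admits_tail_dep C" "w \<in> nonneg_orthant"
  shows "((\<lambda>s. C (s *\<^sub>R w) / s) \<longlongrightarrow> tail_dep C w) (at_right 0)"
proof -
  obtain L where "((\<lambda>s. C (s *\<^sub>R w) / s) \<longlongrightarrow> L) (at_right 0)"
    using assms unfolding admits_tail_dep_def by blast
  moreover from this have "tail_dep C w = L"
    unfolding tail_dep_def by (simp add: tendsto_Lim)
  ultimately show ?thesis by simp
qed

lemma copula_le_near_direction: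
  fixes C1 C2 :: "real^'d::finite \<Rightarrow> real"
  assumes c1: "copula C1" and c2: "copula C2" and w0: "w0 \<in> nonneg_orthant"
    and L1: "((\<lambda>s. C1 (s *\<^sub>R w0) / s) \<longlongrightarrow> L1) (at_right 0)"
    and L2: "((\<lambda>s. C2 (s *\<^sub>R w0) / s) \<longlongrightarrow> L2) (at_right 0)"
    and less: "L1 < L2"
  shows "\<exists>r>0. eventually (\<lambda>s. \<forall>w\<in>nonneg_orthant \<inter> ball w0 r. C1 (s *\<^sub>R w) \<le> C2 (s *\<^sub>R w))
    (at_right 0)"
proof -
  define M where "M = real CARD('d)"
  have M: "M \<ge> 1" unfolding M_def using finite_UNIV_card_ge_0[where 'a='d] by simp
  define g where "g = L2 - L1"
  \<comment> \<open>so that each Lipschitz perturbation is at most \<open>s g / 4\<close>, half of the gap \<open>s g / 2\<close>\<close>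
  define r where "r = g / (4 * M)"
  have g: "g > 0" and r: "r > 0" using less M by (simp_all add: g_def r_def)
  have "eventually (\<lambda>s. C2 (s *\<^sub>R w0) / s - C1 (s *\<^sub>R w0) / s > g/2) (at_right 0)"
    using order_tendstoD(1)[OF tendsto_diff[OF L2 L1], of "g/2"] g by (simp add: g_def)
  moreover have "eventually (\<lambda>s. s < 1 / (norm w0 + r)) (at_right 0)"
    using r unfolding eventually_at_right_field
    by (intro exI[of _ "1 / (norm w0 + r)"]) (auto intro: add_nonneg_pos)
  ultimately show ?thesis
    using eventually_at_right_less[of "0::real"]
  proof (intro exI[of _ r] conjI r, eventually_elim)
    case (elim s)
    show ?case
    proof
      fix w assume w: "w \<in> nonneg_orthant \<inter> ball w0 r"
      have "norm w \<le> norm w0 + r"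
        using w norm_triangle_ineq2[of w w0] by (auto simp: dist_norm norm_minus_commute)
      moreover have "s * (norm w0 + r) < 1"
        using \<open>s < 1 / (norm w0 + r)\<close> r by (simp add: pos_less_divide_eq add_nonneg_pos)
      moreover have "s * norm w0 \<le> s * (norm w0 + r)" "s * norm w \<le> s * (norm w0 + r)"
        using \<open>0 < s\<close> r \<open>norm w \<le> norm w0 + r\<close> by (simp_all add: mult_left_mono)
      ultimately have "s * norm w0 \<le> 1" "s * norm w \<le> 1" by linarith+
      hence cube: "s *\<^sub>R w \<in> unit_cube" "s *\<^sub>R w0 \<in> unit_cube"
        using elim w w0 by (simp_all add: scaleR_in_unit_cube)
      have "M * norm (s *\<^sub>R w - s *\<^sub>R w0) = M * (s * dist w w0)"
        using elim by (simp add: dist_norm flip: scaleR_right_diff_distrib)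
      also have "\<dots> \<le> M * (s * r)"
        using w elim M by (intro mult_left_mono) (auto simp: dist_commute)
      also have "\<dots> = s * g / 4" using M by (simp add: r_def)
      finally have perturbation: "M * norm (s *\<^sub>R w - s *\<^sub>R w0) \<le> s * g / 4" .
      have "s * (g/2) < s * (C2 (s *\<^sub>R w0) / s - C1 (s *\<^sub>R w0) / s)"
        using \<open>g/2 < C2 (s *\<^sub>R w0) / s - C1 (s *\<^sub>R w0) / s\<close> \<open>0 < s\<close>
        by (rule mult_strict_left_mono)
      also have "\<dots> = C2 (s *\<^sub>R w0) - C1 (s *\<^sub>R w0)" using \<open>0 < s\<close> by (simp add: field_simps)
      finally have "s * g / 2 < C2 (s *\<^sub>R w0) - C1 (s *\<^sub>R w0)" by simp
      with perturbation copula_lipschitz[OF c1 cube] copula_lipschitz[OF c2 cube]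
      show "C1 (s *\<^sub>R w) \<le> C2 (s *\<^sub>R w)" unfolding M_def by linarith
    qed
  qed
qed

lemma eventually_forall_compact:
  fixes K :: "'a::metric_space set"
  assumes "compact K" "\<forall>x\<in>K. \<exists>r>0. eventually (\<lambda>s. \<forall>y\<in>K \<inter> ball x r. P s y) F"
  shows "eventually (\<lambda>s. \<forall>y\<in>K. P s y) F"
proof -
  obtain r where r: "\<And>x. x \<in> K \<Longrightarrow> r x > 0"
    "\<And>x. x \<in> K \<Longrightarrow> eventually (\<lambda>s. \<forall>y\<in>K \<inter> ball x (r x). P s y) F"
    using assms(2) by metis
  have "K \<subseteq> (\<Union>x\<in>K. ball x (r x))" using r(1) by force
  then obtain D where D: "D \<subseteq> K" "finite D" "K \<subseteq> (\<Union>x\<in>D. ball x (r x))"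
    using compactE_image[OF assms(1), of K "\<lambda>x. ball x (r x)"] by blast
  have "eventually (\<lambda>s. \<forall>x\<in>D. \<forall>y\<in>K \<inter> ball x (r x). P s y) F"
    using D r(2) by (intro eventually_ball_finite) auto
  then show ?thesis by (rule eventually_mono) (use D(3) in blast)
qed

lemma copula_le_eventually_on_compact:
  fixes C1 C2 :: "real^'d::finite \<Rightarrow> real"
  assumes "copula C1" "copula C2" "admits_tail_dep C1" "admits_tail_dep C2" "TD_less C1 C2"
    and "compact K" "K \<subseteq> pos_orthant"
  shows "eventually (\<lambda>s. \<forall>w\<in>K. C1 (s *\<^sub>R w) \<le> C2 (s *\<^sub>R w)) (at_right 0)"
proof (rule eventually_forall_compact[OF assms(6)], rule ballI)
  fix w0 assume "w0 \<in> K"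
  hence pos: "w0 \<in> pos_orthant" and nonneg: "K \<subseteq> nonneg_orthant" "w0 \<in> nonneg_orthant"
    using assms(7) by (auto simp: pos_orthant_def nonneg_orthant_def less_imp_le)
  have "tail_dep C1 w0 < tail_dep C2 w0" using assms(5) pos unfolding TD_less_def by blast
  then obtain r where "r > 0" and near:
    "eventually (\<lambda>s. \<forall>w\<in>nonneg_orthant \<inter> ball w0 r. C1 (s *\<^sub>R w) \<le> C2 (s *\<^sub>R w)) (at_right 0)"
    using copula_le_near_direction[OF assms(1,2) nonneg(2)
        tail_dep_tendsto[OF assms(3) nonneg(2)] tail_dep_tendsto[OF assms(4) nonneg(2)]]
    by blast
  have "eventually (\<lambda>s. \<forall>w\<in>K \<inter> ball w0 r. C1 (s *\<^sub>R w) \<le> C2 (s *\<^sub>R w)) (at_right 0)"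
    using near by (rule eventually_mono) (use nonneg(1) in blast)
  with \<open>r > 0\<close> show "\<exists>r>0. eventually (\<lambda>s. \<forall>w\<in>K \<inter> ball w0 r. C1 (s *\<^sub>R w) \<le> C2 (s *\<^sub>R w)) (at_right 0)"
    by blast
qed

lemma closed_nonneg_orthant: "closed (nonneg_orthant :: (real^'d) set)"
proof -
  have "(nonneg_orthant :: (real^'d) set) = (\<Inter>i. {u. 0 \<le> u$i})"
    by (auto simp: nonneg_orthant_def)
  also have "closed \<dots>" by (intro closed_INT ballI closed_halfspace_component_ge_cart)
  finally show ?thesis .
qed

lemma compact_cone_Int_sphere:
  fixes S :: "(real^'d) set"
  assumes "closedin (top_of_set nonneg_orthant) (insert 0 S)"
  shows "compact (S \<inter> sphere 0 1)"
proof -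
  have "closed (insert 0 S)"
    using closedin_closed_trans[OF assms closed_nonneg_orthant] .
  then have "compact (insert 0 S \<inter> sphere 0 1)" by (intro closed_Int_compact compact_sphere)
  also have "insert 0 S \<inter> sphere 0 1 = S \<inter> sphere 0 1" by auto
  finally show ?thesis .
qed

theorem mainTheorem5:
  fixes C1 C2 :: "real^'d::finite \<Rightarrow> real" and S :: "(real^'d) set"
  assumes "copula C1" and "copula C2"
    and "admits_tail_dep C1" and "admits_tail_dep C2"
    and "TD_less C1 C2"
    and "S \<subseteq> pos_orthant"
    and "\<forall>w\<in>S. \<forall>c>(0::real). c *\<^sub>R w \<in> S"
    and "closedin (top_of_set nonneg_orthant) (insert 0 S)"
  shows "\<exists>\<epsilon>>0. \<forall>u \<in> S \<inter> ball 0 \<epsilon> \<inter> unit_cube. C1 u \<le> C2 u"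
proof -
  have "eventually (\<lambda>s. \<forall>w\<in>S \<inter> sphere 0 1. C1 (s *\<^sub>R w) \<le> C2 (s *\<^sub>R w)) (at_right 0)"
    using assms(6) by (intro copula_le_eventually_on_compact[OF assms(1-5)]
        compact_cone_Int_sphere[OF assms(8)]) auto
  then obtain b where b: "b > 0"
    "\<And>s. 0 < s \<Longrightarrow> s < b \<Longrightarrow> \<forall>w\<in>S \<inter> sphere 0 1. C1 (s *\<^sub>R w) \<le> C2 (s *\<^sub>R w)"
    unfolding eventually_at_right_field by auto
  show ?thesis
  proof (intro exI[of _ b] conjI b(1) ballI)
    fix u assume u: "u \<in> S \<inter> ball 0 b \<inter> unit_cube"
    then have "u \<noteq> 0" using assms(6) by (force simp: pos_orthant_def)
    define w where "w = (1 / norm u) *\<^sub>R u"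
    have "w \<in> S \<inter> sphere 0 1" and u_eq: "norm u *\<^sub>R w = u"
      using u \<open>u \<noteq> 0\<close> assms(7) by (auto simp: w_def)
    moreover have "0 < norm u" "norm u < b" using u \<open>u \<noteq> 0\<close> by auto
    ultimately have "C1 (norm u *\<^sub>R w) \<le> C2 (norm u *\<^sub>R w)" using b(2) by blast
    then show "C1 u \<le> C2 u" by (simp only: u_eq)
  qed
qed

end
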